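(* Let $f$ satisfy Assumption A, $g$ satisfy Assumption B, $L>L_f$, and let $(u_k)$ be a sequence of proximal gradient iterates with parameter $L$ having a weak sequential limit point $u^*\in L^2(\Omega)$. Assume that the whole sequence satisfies $\nabla f(u_k)(x)\to\nabla f(u^* )(x)$ for almost all $x\in\Omega$. Then $u^*(x)\in\mathcal{G}_L(-\nabla f(u^* )(x))$ for almost all $x\in\Omega$.
   Context: $\Omega\subset\mathbb{R}^n$ Lebesgue measurable with finite measure. Assumption A: $f:L^2(\Omega)\to\mathbb{R}$ bounded below, weakly lower semicontinuous, Fréchet differentiable, $\nabla f$ Lipschitz with constant $L_f$. Assumption B on $g:\mathbb{R}\to\mathbb{R}\cup\{+\infty\}$: (B1) lsc, symmetric, $g(0)=0$; (B2) $g(u)<\infty$ for some $u\ne0$; (B3) one of (B3a) $g$ twice differentiable on some $(0,\epsilon)$, $\limsup_{u\searrow0}g''(u)\in(-\infty,0)$; (B3b) same differentiability, $\lim_{u\searrow0}g''(u)=-\infty$; (B3c) $\liminf_{u\searrow0}g(u)>0$; (B4) $g\ge0$. Proximal gradient iterates with parameter $L>0$: $(u_k)_{k\ge0}\subset L^2(\Omega)$, arbitrary $u_0$, each $u_{k+1}$ a global minimizer over $L^2(\Omega)$ of $f(u_k)+\int_\Omega\nabla f(u_k)(u-u_k)\,dx+\frac L2\|u-u_k\|^2_{L^2(\Omega)}+\int_\Omega g(u(x))\,dx$. $\mathcal{G}_L:\mathbb{R}\rightrightarrows\mathbb{R}$: $u\in\mathcal{G}_L(z)$ iff $u$ is a global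 minimizer of $v\mapsto -zv+\frac L2(v-u)^2+g(v)$ over $v\in\mathbb{R}$. *)

theory Defs
  imports "HOL-Analysis.Analysis"
begin

text \<open>L^2(Omega) is modelled by square-integrable Lebesgue measurable real functions
  on Omega (representatives); the measure space is Lebesgue measure restricted to Omega.\<close>

definition L2 :: "'a::euclidean_space set \<Rightarrow> ('a \<Rightarrow> real) set" where
  "L2 \<Omega> = {u. u \<in> borel_measurable (lebesgue_on \<Omega>) \<and>
                 integrable (lebesgue_on \<Omega>) (\<lambda>x. (u x)\<^sup>2)}"

definition l2_inner :: "'a::euclidean_space set \<Rightarrow> ('a \<Rightarrow> real) \<Rightarrow> ('a \<Rightarrow> real) \<Rightarrow> real" where
  "l2_inner \<Omega> u v = (\<integral>x. u x * v x \<partial>lebesgue_on \<Omega>)"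

definition l2_norm :: "'a::euclidean_space set \<Rightarrow> ('a \<Rightarrow> real) \<Rightarrow> real" where
  "l2_norm \<Omega> u = sqrt (\<integral>x. (u x)\<^sup>2 \<partial>lebesgue_on \<Omega>)"

definition weak_conv :: "'a::euclidean_space set \<Rightarrow> (nat \<Rightarrow> 'a \<Rightarrow> real) \<Rightarrow> ('a \<Rightarrow> real) \<Rightarrow> bool" where
  "weak_conv \<Omega> w u \<longleftrightarrow>
     (\<forall>v\<in>L2 \<Omega>. ((\<lambda>k. l2_inner \<Omega> (w k) v) \<longlongrightarrow> l2_inner \<Omega> u v) sequentially)"

definition weakly_lsc :: "'a::euclidean_space set \<Rightarrow> (('a \<Rightarrow> real) \<Rightarrow> real) \<Rightarrow> bool" where
  "weakly_lsc \<Omega> f \<longleftrightarrow>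
     (\<forall>w u. (\<forall>k. w k \<in> L2 \<Omega>) \<longrightarrow> u \<in> L2 \<Omega> \<longrightarrow> weak_conv \<Omega> w u \<longrightarrow>
        ereal (f u) \<le> liminf (\<lambda>k. ereal (f (w k))))"

definition frechet_gradient :: "'a::euclidean_space set \<Rightarrow> (('a \<Rightarrow> real) \<Rightarrow> real)
      \<Rightarrow> (('a \<Rightarrow> real) \<Rightarrow> ('a \<Rightarrow> real)) \<Rightarrow> bool" where
  "frechet_gradient \<Omega> f df \<longleftrightarrow>
     (\<forall>u\<in>L2 \<Omega>. df u \<in> L2 \<Omega> \<and>
        (\<forall>\<epsilon>>0. \<exists>\<delta>>0. \<forall>v\<in>L2 \<Omega>. l2_norm \<Omega> (\<lambda>x. v x - u x) < \<delta> \<longrightarrow>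
            \<bar>f v - f u - l2_inner \<Omega> (df u) (\<lambda>x. v x - u x)\<bar>
              \<le> \<epsilon> * l2_norm \<Omega> (\<lambda>x. v x - u x)))"

definition assumption_A :: "'a::euclidean_space set \<Rightarrow> (('a \<Rightarrow> real) \<Rightarrow> real)
      \<Rightarrow> (('a \<Rightarrow> real) \<Rightarrow> ('a \<Rightarrow> real)) \<Rightarrow> real \<Rightarrow> bool" where
  "assumption_A \<Omega> f df Lf \<longleftrightarrow>
     (\<exists>c. \<forall>u\<in>L2 \<Omega>. c \<le> f u) \<and>
     weakly_lsc \<Omega> f \<and>
     frechet_gradient \<Omega> f df \<and>
     0 \<le> Lf \<and>
     (\<forall>u\<in>L2 \<Omega>. \<forall>v\<in>L2 \<Omega>.
        l2_norm \<Omega> (\<lambda>x. df u x - df v x) \<le> Lf * l2_norm \<Omega> (\<lambda>x. u x - v x))"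

definition lsc_ereal :: "(real \<Rightarrow> ereal) \<Rightarrow> bool" where
  "lsc_ereal g \<longleftrightarrow> (\<forall>x. g x \<le> Liminf (at x) g)"

definition twice_diff_near0 :: "(real \<Rightarrow> ereal) \<Rightarrow> real \<Rightarrow> (real \<Rightarrow> real) \<Rightarrow> bool" where
  "twice_diff_near0 g \<epsilon> g2 \<longleftrightarrow> 0 < \<epsilon> \<and>
     (\<forall>x\<in>{0<..<\<epsilon>}. \<bar>g x\<bar> \<noteq> \<infinity>) \<and>
     (\<exists>g1. \<forall>x\<in>{0<..<\<epsilon>}.
        ((\<lambda>y. real_of_ereal (g y)) has_real_derivative g1 x) (at x) \<and>
        (g1 has_real_derivative g2 x) (at x))"

definition assumption_B :: "(real \<Rightarrow> ereal) \<Rightarrow> bool" where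
  "assumption_B g \<longleftrightarrow>
     \<comment> \<open>(B1)\<close>
     lsc_ereal g \<and> (\<forall>u. g (- u) = g u) \<and> g 0 = 0 \<and>
     \<comment> \<open>(B2)\<close>
     (\<exists>u. u \<noteq> 0 \<and> g u < \<infinity>) \<and>
     \<comment> \<open>(B3)\<close>
     ((\<exists>\<epsilon> g2. twice_diff_near0 g \<epsilon> g2 \<and>
          - \<infinity> < Limsup (at_right 0) (\<lambda>x. ereal (g2 x)) \<and> Limsup (at_right 0) (\<lambda>x. ereal (g2 x)) < 0)
      \<or> (\<exists>\<epsilon> g2. twice_diff_near0 g \<epsilon> g2 \<and> filterlim g2 at_bot (at_right 0))
      \<or> Liminf (at_right 0) g > 0) \<and>
     \<comment> \<open>(B4)\<close>
     (\<forall>u. 0 \<le> g u)"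

text \<open>Integral functional G(u) = int_Omega g(u(x)) dx (g is nonnegative).\<close>
definition G_int :: "'a::euclidean_space set \<Rightarrow> (real \<Rightarrow> ereal) \<Rightarrow> ('a \<Rightarrow> real) \<Rightarrow> ereal" where
  "G_int \<Omega> g u = enn2ereal (\<integral>\<^sup>+ x. e2ennreal (g (u x)) \<partial>lebesgue_on \<Omega>)"

definition prox_grad_iterates :: "'a::euclidean_space set \<Rightarrow> (('a \<Rightarrow> real) \<Rightarrow> real)
      \<Rightarrow> (('a \<Rightarrow> real) \<Rightarrow> ('a \<Rightarrow> real)) \<Rightarrow> (real \<Rightarrow> ereal) \<Rightarrow> real
      \<Rightarrow> (nat \<Rightarrow> 'a \<Rightarrow> real) \<Rightarrow> bool" where
  "prox_grad_iterates \<Omega> f df g L u \<longleftrightarrow>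
     (\<forall>k. u k \<in> L2 \<Omega>) \<and>
     (\<forall>k. \<forall>v\<in>L2 \<Omega>.
        ereal (f (u k) + l2_inner \<Omega> (df (u k)) (\<lambda>x. u (Suc k) x - u k x)
               + L / 2 * (l2_norm \<Omega> (\<lambda>x. u (Suc k) x - u k x))\<^sup>2) + G_int \<Omega> g (u (Suc k))
        \<le> ereal (f (u k) + l2_inner \<Omega> (df (u k)) (\<lambda>x. v x - u k x)
               + L / 2 * (l2_norm \<Omega> (\<lambda>x. v x - u k x))\<^sup>2) + G_int \<Omega> g v)"

definition G_L :: "(real \<Rightarrow> ereal) \<Rightarrow> real \<Rightarrow> real \<Rightarrow> real set" where
  "G_L g L z = {u. \<forall>v. ereal (- z * u + L / 2 * (u - u)\<^sup>2) + g u
                        \<le> ereal (- z * v + L / 2 * (v - u)\<^sup>2) + g v}"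

end

theory Submission
  imports Defs
begin

(* Summing the sufficient-decrease inequality of the proximal gradient method shows that
   the squared L2 norms of u_(k+1) - u_k are summable, so u_(k+1)(x) - u_k(x) -> 0 almost
   everywhere. The subproblem is an integral functional, so global minimality of u_(k+1)
   localizes: for almost every x, u_(k+1)(x) beats every competitor d of a countable set D
   that is dense in the graph of g. Testing weak convergence against indicator functions shows
   that ustar(x) lies between the lower and upper limits of u_k(x); as the increments vanish,
   ustar(x) is a cluster value of u_k(x). Passing to the limit along the indices where u_k(x) is
   close to ustar(x), with g lower semicontinuous and grad f(u_k)(x) -> grad f(ustar)(x), shows that
   ustar(x) beats every d in D, and density of D in the graph of g extends this to all
   competitors. *)

section \<open>L2 functions\<close>

lemma integrable_mult_L2:
  assumes "u \<in> L2 \<Omega>" "v \<in> L2 \<Omega>"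
  shows "integrable (lebesgue_on \<Omega>) (\<lambda>x. u x * v x)"
proof (rule Bochner_Integration.integrable_bound)
  show "integrable (lebesgue_on \<Omega>) (\<lambda>x. (u x)\<^sup>2 + (v x)\<^sup>2)"
    using assms by (simp add: L2_def)
  show "(\<lambda>x. u x * v x) \<in> borel_measurable (lebesgue_on \<Omega>)"
    using assms by (simp add: L2_def borel_measurable_times)
  show "AE x in lebesgue_on \<Omega>. norm (u x * v x) \<le> norm ((u x)\<^sup>2 + (v x)\<^sup>2)"
  proof (intro AE_I2)
    fix x
    have "2 * (\<bar>u x\<bar> * \<bar>v x\<bar>) \<le> (u x)\<^sup>2 + (v x)\<^sup>2"
      using sum_squares_bound[of "\<bar>u x\<bar>" "\<bar>v x\<bar>"] by simp
    moreover have "0 \<le> \<bar>u x\<bar> * \<bar>v x\<bar>" by simp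
    ultimately show "norm (u x * v x) \<le> norm ((u x)\<^sup>2 + (v x)\<^sup>2)"
      unfolding real_norm_def abs_mult by (simp only: abs_of_nonneg sum_power2_ge_zero)
  qed
qed

lemma l2_inner_le:
  assumes u: "u \<in> L2 \<Omega>" and v: "v \<in> L2 \<Omega>"
  shows "\<bar>l2_inner \<Omega> u v\<bar> \<le> l2_norm \<Omega> u * l2_norm \<Omega> v"
proof -
  let ?M = "lebesgue_on \<Omega>"
  have [measurable]: "u \<in> borel_measurable ?M" "v \<in> borel_measurable ?M"
    using u v by (simp_all add: L2_def)
  have nn: "(\<integral>\<^sup>+x. ennreal (h x) \<partial>?M) = ennreal (\<integral>x. h x \<partial>?M)"
    if "integrable ?M h" "\<And>x. 0 \<le> h x" for h
    using that by (intro nn_integral_eq_integral) auto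
  have uv: "(\<integral>\<^sup>+x. ennreal \<bar>u x\<bar> * ennreal \<bar>v x\<bar> \<partial>?M) = ennreal (\<integral>x. \<bar>u x * v x\<bar> \<partial>?M)"
    using integrable_abs[OF integrable_mult_L2[OF u v]]
    by (subst nn[symmetric]) (auto simp: ennreal_mult abs_mult)
  have sq: "(\<integral>\<^sup>+x. ennreal \<bar>w x\<bar> ^ 2 \<partial>?M) = ennreal (\<integral>x. (w x)\<^sup>2 \<partial>?M)" if "w \<in> L2 \<Omega>" for w
    using that by (subst nn[symmetric]) (auto simp: L2_def ennreal_power)
  have "(\<integral>\<^sup>+x. ennreal \<bar>u x\<bar> * ennreal \<bar>v x\<bar> \<partial>?M)\<^sup>2
      \<le> (\<integral>\<^sup>+x. ennreal \<bar>u x\<bar> ^ 2 \<partial>?M) * (\<integral>\<^sup>+x. ennreal \<bar>v x\<bar> ^ 2 \<partial>?M)"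
    by (rule Cauchy_Schwarz_nn_integral) auto
  then have "(\<integral>x. \<bar>u x * v x\<bar> \<partial>?M)\<^sup>2 \<le> (\<integral>x. (u x)\<^sup>2 \<partial>?M) * (\<integral>x. (v x)\<^sup>2 \<partial>?M)"
    unfolding uv sq[OF u] sq[OF v]
    by (simp add: ennreal_power ennreal_mult[symmetric] integral_nonneg_AE)
  then have "(\<integral>x. \<bar>u x * v x\<bar> \<partial>?M) \<le> l2_norm \<Omega> u * l2_norm \<Omega> v"
    unfolding l2_norm_def real_sqrt_mult[symmetric] by (rule real_le_rsqrt)
  moreover have "\<bar>l2_inner \<Omega> u v\<bar> \<le> (\<integral>x. \<bar>u x * v x\<bar> \<partial>?M)"
    unfolding l2_inner_def using integral_abs_bound[of ?M "\<lambda>x. u x * v x"] by simp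
  ultimately show ?thesis by linarith
qed

lemma L2_lin:
  assumes "u \<in> L2 \<Omega>" "v \<in> L2 \<Omega>"
  shows "(\<lambda>x. a * u x + b * v x) \<in> L2 \<Omega>"
proof -
  have "(\<lambda>x. (a * u x + b * v x)\<^sup>2) = (\<lambda>x. a\<^sup>2 * (u x)\<^sup>2 + 2 * a * b * (u x * v x) + b\<^sup>2 * (v x)\<^sup>2)"
    by (auto simp: power2_eq_square algebra_simps)
  moreover have "integrable (lebesgue_on \<Omega>) \<dots>"
    using assms integrable_mult_L2[OF assms]
    by (intro Bochner_Integration.integrable_add integrable_mult_right) (auto simp: L2_def)
  ultimately show ?thesis using assms by (auto simp: L2_def)
qed

lemma L2_diff: "u \<in> L2 \<Omega> \<Longrightarrow> v \<in> L2 \<Omega> \<Longrightarrow> (\<lambda>x. u x - v x) \<in> L2 \<Omega>"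
  using L2_lin[of u \<Omega> v 1 "-1"] by simp

lemma L2_uminus: "u \<in> L2 \<Omega> \<Longrightarrow> (\<lambda>x. - u x) \<in> L2 \<Omega>"
  using L2_lin[of u \<Omega> u "-1" 0] by simp

lemma L2_zero: "(\<lambda>x. 0) \<in> L2 \<Omega>"
  by (simp add: L2_def)

lemma finite_measure_lebesgue_on:
  assumes "\<Omega> \<in> sets lebesgue" "emeasure lebesgue \<Omega> < \<infinity>"
  shows "finite_measure (lebesgue_on \<Omega>)"
  using assms by (intro finite_measureI) (simp add: emeasure_restrict_space)

lemma L2_const: "finite_measure (lebesgue_on \<Omega>) \<Longrightarrow> (\<lambda>x. d) \<in> L2 \<Omega>"
  unfolding L2_def by (simp add: finite_measure.integrable_const)

lemma L2_patch:
  assumes fm: "finite_measure (lebesgue_on \<Omega>)" and b: "b \<in> L2 \<Omega>" and A: "A \<in> sets (lebesgue_on \<Omega>)"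
  shows "(\<lambda>x. if x \<in> A then d else b x) \<in> L2 \<Omega>"
proof -
  interpret finite_measure "lebesgue_on \<Omega>" by (rule fm)
  have [measurable]: "b \<in> borel_measurable (lebesgue_on \<Omega>)" "A \<in> sets (lebesgue_on \<Omega>)"
    using b A by (auto simp: L2_def)
  have "integrable (lebesgue_on \<Omega>) (\<lambda>x. (if x \<in> A then d else b x)\<^sup>2)"
  proof (rule Bochner_Integration.integrable_bound)
    show "integrable (lebesgue_on \<Omega>) (\<lambda>x. (b x)\<^sup>2 + d\<^sup>2)" using b by (auto simp: L2_def)
    show "AE x in lebesgue_on \<Omega>. norm ((if x \<in> A then d else b x)\<^sup>2) \<le> norm ((b x)\<^sup>2 + d\<^sup>2)"
      by (intro AE_I2) auto
  qed measurable
  moreover have "(\<lambda>x. if x \<in> A then d else b x) \<in> borel_measurable (lebesgue_on \<Omega>)" by measurable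
  ultimately show ?thesis unfolding L2_def by simp
qed

lemma l2_norm_nonneg: "0 \<le> l2_norm \<Omega> u"
  by (simp add: l2_norm_def integral_nonneg_AE)

lemma l2_norm_power2: "(l2_norm \<Omega> u)\<^sup>2 = (\<integral>x. (u x)\<^sup>2 \<partial>lebesgue_on \<Omega>)"
  unfolding l2_norm_def by (simp add: integral_nonneg_AE)

lemma l2_norm_scale: "l2_norm \<Omega> (\<lambda>x. c * u x) = \<bar>c\<bar> * l2_norm \<Omega> u"
  unfolding l2_norm_def by (simp add: power_mult_distrib real_sqrt_mult)

lemma l2_inner_scale_right: "l2_inner \<Omega> u (\<lambda>x. c * v x) = c * l2_inner \<Omega> u v"
  unfolding l2_inner_def by (simp add: mult.left_commute)

lemma l2_inner_diff_left:
  assumes "u \<in> L2 \<Omega>" "v \<in> L2 \<Omega>" "w \<in> L2 \<Omega>"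
  shows "l2_inner \<Omega> u w - l2_inner \<Omega> v w = l2_inner \<Omega> (\<lambda>x. u x - v x) w"
  unfolding l2_inner_def using integrable_mult_L2[OF assms(1,3)] integrable_mult_L2[OF assms(2,3)]
  by (simp add: left_diff_distrib)

section \<open>The descent lemma\<close>

lemma frechet_gradient_has_derivative_line:
  assumes fg: "frechet_gradient \<Omega> f df" and u: "u \<in> L2 \<Omega>" and h: "h \<in> L2 \<Omega>"
  shows "((\<lambda>t. f (\<lambda>x. u x + t * h x)) has_real_derivative
           l2_inner \<Omega> (df (\<lambda>x. u x + t * h x)) h) (at t)"
proof -
  define p where "p = (\<lambda>t x. u x + t * h x)"
  have p: "p s \<in> L2 \<Omega>" for s unfolding p_def using L2_lin[OF u h, of 1 s] by simp
  have p_diff: "(\<lambda>x. p s x - p t x) = (\<lambda>x. (s - t) * h x)" for s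
    unfolding p_def by (auto simp: algebra_simps)
  define N where "N = l2_norm \<Omega> h"
  have N: "0 \<le> N" unfolding N_def by (rule l2_norm_nonneg)
  define D where "D = l2_inner \<Omega> (df (p t)) h"
  have "((\<lambda>s. (f (p s) - f (p t)) / (s - t)) \<longlongrightarrow> D) (at t)"
  proof (rule LIM_I)
    fix e :: real assume e: "0 < e"
    define \<epsilon> where "\<epsilon> = e / (2 * (N + 1))"
    have \<epsilon>: "0 < \<epsilon>" unfolding \<epsilon>_def using e N by simp
    have \<epsilon>N: "\<epsilon> * N < e"
    proof -
      have "\<epsilon> * N \<le> \<epsilon> * (N + 1)" using \<epsilon> by simp
      also have "\<dots> = e / 2" unfolding \<epsilon>_def using N by (simp add: field_simps)
      finally show ?thesis using e by simp
    qed
    obtain \<delta> where \<delta>: "\<delta> > 0" and approx: "\<And>w. w \<in> L2 \<Omega> \<Longrightarrow> l2_norm \<Omega> (\<lambda>x. w x - p t x) < \<delta> \<Longrightarrow>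
        \<bar>f w - f (p t) - l2_inner \<Omega> (df (p t)) (\<lambda>x. w x - p t x)\<bar> \<le> \<epsilon> * l2_norm \<Omega> (\<lambda>x. w x - p t x)"
      using fg p[of t] \<epsilon> unfolding frechet_gradient_def by blast
    show "\<exists>r>0. \<forall>s. s \<noteq> t \<and> norm (s - t) < r \<longrightarrow> norm ((f (p s) - f (p t)) / (s - t) - D) < e"
    proof (intro exI[of _ "\<delta> / (N + 1)"] conjI allI impI)
      show "0 < \<delta> / (N + 1)" using \<delta> N by simp
      fix s assume s: "s \<noteq> t \<and> norm (s - t) < \<delta> / (N + 1)"
      have "\<bar>s - t\<bar> * N \<le> \<bar>s - t\<bar> * (N + 1)" by (simp add: mult_left_mono)
      also have "\<dots> < \<delta>" using s N by (simp add: pos_less_divide_eq)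
      finally have "l2_norm \<Omega> (\<lambda>x. p s x - p t x) < \<delta>"
        unfolding p_diff l2_norm_scale N_def .
      from approx[OF p this]
      have "\<bar>f (p s) - f (p t) - (s - t) * D\<bar> \<le> \<epsilon> * (\<bar>s - t\<bar> * N)"
        unfolding p_diff l2_norm_scale l2_inner_scale_right D_def N_def .
      then have "\<bar>(f (p s) - f (p t)) / (s - t) - D\<bar> \<le> \<epsilon> * N"
        using s by (simp add: field_simps abs_divide abs_mult)
      also have "\<dots> < e" by (rule \<epsilon>N)
      finally show "norm ((f (p s) - f (p t)) / (s - t) - D) < e" by simp
    qed
  qed
  then show ?thesis unfolding p_def D_def by (simp add: has_field_derivative_iff)
qed

lemma descent_lemma:
  assumes fg: "frechet_gradient \<Omega> f df"
    and lip: "\<forall>u\<in>L2 \<Omega>. \<forall>v\<in>L2 \<Omega>. l2_norm \<Omega> (\<lambda>x. df u x - df v x) \<le> Lf * l2_norm \<Omega> (\<lambda>x. u x - v x)"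
    and u: "u \<in> L2 \<Omega>" and v: "v \<in> L2 \<Omega>"
  shows "f v \<le> f u + l2_inner \<Omega> (df u) (\<lambda>x. v x - u x) + Lf / 2 * (l2_norm \<Omega> (\<lambda>x. v x - u x))\<^sup>2"
proof -
  define h where "h = (\<lambda>x. v x - u x)"
  have h: "h \<in> L2 \<Omega>" unfolding h_def using v u by (rule L2_diff)
  define p where "p = (\<lambda>t x. u x + t * h x)"
  have p: "p t \<in> L2 \<Omega>" for t unfolding p_def using L2_lin[OF u h, of 1 t] by simp
  have dfp: "df (p t) \<in> L2 \<Omega>" for t using fg p unfolding frechet_gradient_def by blast
  define N where "N = l2_norm \<Omega> h"
  define D where "D = (\<lambda>t. l2_inner \<Omega> (df (p t)) h)"
  \<comment> \<open>The slope \<open>D\<close> of \<open>t \<mapsto> f (p t)\<close> grows at rate at most \<open>Lf N\<^sup>2\<close>, so subtracting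
    the quadratic model leaves a nonincreasing function.\<close>
  define \<psi> where "\<psi> = (\<lambda>t. f (p t) - t * D 0 - Lf * N\<^sup>2 / 2 * t\<^sup>2)"
  have slope: "D t - D 0 \<le> Lf * N\<^sup>2 * t" if "0 \<le> t" for t
  proof -
    have "D t - D 0 = l2_inner \<Omega> (\<lambda>x. df (p t) x - df (p 0) x) h"
      unfolding D_def by (rule l2_inner_diff_left[OF dfp dfp h])
    also have "\<dots> \<le> l2_norm \<Omega> (\<lambda>x. df (p t) x - df (p 0) x) * N"
      unfolding N_def by (rule order_trans[OF abs_ge_self l2_inner_le[OF L2_diff[OF dfp dfp] h]])
    also have "\<dots> \<le> Lf * l2_norm \<Omega> (\<lambda>x. p t x - p 0 x) * N"
      using lip p unfolding N_def by (intro mult_right_mono l2_norm_nonneg) auto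
    also have "(\<lambda>x. p t x - p 0 x) = (\<lambda>x. t * h x)" unfolding p_def by simp
    finally show ?thesis
      unfolding l2_norm_scale N_def using that by (simp add: power2_eq_square mult_ac)
  qed
  have "\<psi> 1 \<le> \<psi> 0"
  proof (rule DERIV_nonpos_imp_nonincreasing[of 0 1 \<psi>])
    fix t :: real assume t: "0 \<le> t" "t \<le> 1"
    have "(\<psi> has_real_derivative (D t - D 0 - Lf * N\<^sup>2 / 2 * (2 * t))) (at t)"
      unfolding \<psi>_def p_def D_def
      by (auto intro!: derivative_eq_intros frechet_gradient_has_derivative_line[OF fg u h])
    then show "\<exists>y. DERIV \<psi> t :> y \<and> y \<le> 0" using slope[OF t(1)] by force
  qed simp
  moreover have "p 0 = u" "p 1 = v" unfolding p_def h_def by auto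
  ultimately show ?thesis unfolding \<psi>_def D_def N_def h_def by (simp add: algebra_simps)
qed

section \<open>The proximal subproblem\<close>

lemma G_int_zero: "g 0 = 0 \<Longrightarrow> G_int \<Omega> g (\<lambda>x. 0) = 0"
  unfolding G_int_def by (simp add: zero_ennreal.rep_eq e2ennreal_neg)

lemma G_int_nonneg: "0 \<le> G_int \<Omega> g v"
  unfolding G_int_def by simp

lemma G_int_eq_nn_integral:
  assumes g0: "\<And>t. 0 \<le> g t" and fin: "AE x in lebesgue_on \<Omega>. g (v x) \<noteq> \<infinity>"
  shows "G_int \<Omega> g v = enn2ereal (\<integral>\<^sup>+ x. ennreal (real_of_ereal (g (v x))) \<partial>lebesgue_on \<Omega>)"
  unfolding G_int_def
proof (intro arg_cong[where f = enn2ereal] nn_integral_cong_AE)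
  show "AE x in lebesgue_on \<Omega>. e2ennreal (g (v x)) = ennreal (real_of_ereal (g (v x)))"
    using fin
  proof eventually_elim
    case (elim x)
    then have "g (v x) = ereal (real_of_ereal (g (v x)))"
      using g0[of "v x"] by (cases "g (v x)") auto
    then show ?case by (metis e2ennreal_ereal)
  qed
qed

lemma G_int_eq_integral:
  assumes g0: "\<And>t. 0 \<le> g t" and fin: "AE x in lebesgue_on \<Omega>. g (v x) \<noteq> \<infinity>"
    and int: "integrable (lebesgue_on \<Omega>) (\<lambda>x. real_of_ereal (g (v x)))"
  shows "G_int \<Omega> g v = ereal (\<integral>x. real_of_ereal (g (v x)) \<partial>lebesgue_on \<Omega>)"
  unfolding G_int_eq_nn_integral[OF g0 fin] using int g0
  by (subst nn_integral_eq_integral) (auto simp: real_of_ereal_pos integral_nonneg_AE)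

lemma G_int_finite_imp:
  assumes g0: "\<And>t. 0 \<le> g t" and meas: "(\<lambda>x. g (v x)) \<in> borel_measurable (lebesgue_on \<Omega>)"
    and G: "G_int \<Omega> g v \<noteq> \<infinity>"
  shows "AE x in lebesgue_on \<Omega>. g (v x) \<noteq> \<infinity>"
    and "integrable (lebesgue_on \<Omega>) (\<lambda>x. real_of_ereal (g (v x)))"
proof -
  have "(\<integral>\<^sup>+ x. e2ennreal (g (v x)) \<partial>lebesgue_on \<Omega>) \<noteq> \<infinity>"
    using G unfolding G_int_def by simp
  then have "AE x in lebesgue_on \<Omega>. e2ennreal (g (v x)) \<noteq> \<infinity>"
    by (intro nn_integral_PInf_AE measurable_compose[OF meas measurable_e2ennreal])
  then show fin: "AE x in lebesgue_on \<Omega>. g (v x) \<noteq> \<infinity>"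
    by eventually_elim auto
  show "integrable (lebesgue_on \<Omega>) (\<lambda>x. real_of_ereal (g (v x)))"
  proof (rule integrableI_nonneg)
    show "(\<lambda>x. real_of_ereal (g (v x))) \<in> borel_measurable (lebesgue_on \<Omega>)"
      using meas by (rule borel_measurable_real_of_ereal)
    show "AE x in lebesgue_on \<Omega>. 0 \<le> real_of_ereal (g (v x))"
      using g0 by (simp add: real_of_ereal_pos)
    show "(\<integral>\<^sup>+ x. ennreal (real_of_ereal (g (v x))) \<partial>lebesgue_on \<Omega>) < \<infinity>"
      using G unfolding G_int_eq_nn_integral[OF g0 fin] by (simp add: top.not_eq_extremum)
  qed
qed

(* The objective of the proximal subproblem with its constant term f(u_k) dropped. *)
definition prox_objective ::
  "'a::euclidean_space set \<Rightarrow> (real \<Rightarrow> ereal) \<Rightarrow> real \<Rightarrow> ('a \<Rightarrow> real) \<Rightarrow> ('a \<Rightarrow> real) \<Rightarrow> ('a \<Rightarrow> real) \<Rightarrow> ereal"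
  where "prox_objective \<Omega> g L c a v =
    ereal (l2_inner \<Omega> c (\<lambda>x. v x - a x) + L / 2 * (l2_norm \<Omega> (\<lambda>x. v x - a x))\<^sup>2) + G_int \<Omega> g v"

lemma prox_objective_self: "prox_objective \<Omega> g L c a a = G_int \<Omega> g a"
  unfolding prox_objective_def l2_inner_def l2_norm_def by (simp add: zero_ereal_def[symmetric])

lemma prox_objective_eq_integral:
  assumes g0: "\<And>t. 0 \<le> g t" and a: "a \<in> L2 \<Omega>" and c: "c \<in> L2 \<Omega>" and v: "v \<in> L2 \<Omega>"
    and fin: "AE x in lebesgue_on \<Omega>. g (v x) \<noteq> \<infinity>"
    and int: "integrable (lebesgue_on \<Omega>) (\<lambda>x. real_of_ereal (g (v x)))"
  shows "prox_objective \<Omega> g L c a v = ereal (\<integral>x. c x * (v x - a x) + L / 2 * (v x - a x)\<^sup>2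
           + real_of_ereal (g (v x)) \<partial>lebesgue_on \<Omega>)"
    and "integrable (lebesgue_on \<Omega>)
           (\<lambda>x. c x * (v x - a x) + L / 2 * (v x - a x)\<^sup>2 + real_of_ereal (g (v x)))"
proof -
  have h: "(\<lambda>x. v x - a x) \<in> L2 \<Omega>" using v a by (rule L2_diff)
  note i1 = integrable_mult_L2[OF c h]
  have i2: "integrable (lebesgue_on \<Omega>) (\<lambda>x. (v x - a x)\<^sup>2)" using h by (simp add: L2_def)
  show "integrable (lebesgue_on \<Omega>)
      (\<lambda>x. c x * (v x - a x) + L / 2 * (v x - a x)\<^sup>2 + real_of_ereal (g (v x)))"
    using i1 i2 int by auto
  show "prox_objective \<Omega> g L c a v = ereal (\<integral>x. c x * (v x - a x) + L / 2 * (v x - a x)\<^sup>2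
      + real_of_ereal (g (v x)) \<partial>lebesgue_on \<Omega>)"
    unfolding prox_objective_def G_int_eq_integral[OF g0 fin int] l2_inner_def l2_norm_power2
    using i1 i2 int by simp
qed

lemma prox_grad_iterates_minimal:
  assumes "prox_grad_iterates \<Omega> f df g L u" "v \<in> L2 \<Omega>"
  shows "prox_objective \<Omega> g L (df (u k)) (u k) (u (Suc k)) \<le> prox_objective \<Omega> g L (df (u k)) (u k) v"
proof -
  have "ereal (f (u k)) + prox_objective \<Omega> g L (df (u k)) (u k) (u (Suc k))
      \<le> ereal (f (u k)) + prox_objective \<Omega> g L (df (u k)) (u k) v"
    using assms unfolding prox_grad_iterates_def prox_objective_def by (simp add: add.assoc[symmetric])
  then show ?thesis by (simp add: ereal_add_le_add_iff)
qed

lemma prox_grad_iterates_G_int_finite: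
  assumes "g 0 = 0" "prox_grad_iterates \<Omega> f df g L u"
  shows "G_int \<Omega> g (u (Suc k)) \<noteq> \<infinity>"
  using prox_grad_iterates_minimal[OF assms(2) L2_zero, of k]
  by (auto simp: prox_objective_def G_int_zero[of g, OF assms(1)])

lemma prox_grad_decrease:
  assumes A: "assumption_A \<Omega> f df Lf" and P: "prox_grad_iterates \<Omega> f df g L u"
  shows "ereal (f (u (Suc k)) + (L - Lf) / 2 * (l2_norm \<Omega> (\<lambda>x. u (Suc k) x - u k x))\<^sup>2)
      + G_int \<Omega> g (u (Suc k)) \<le> ereal (f (u k)) + G_int \<Omega> g (u k)"
proof -
  have uL2: "u j \<in> L2 \<Omega>" for j using P unfolding prox_grad_iterates_def by blast
  define I where "I = l2_inner \<Omega> (df (u k)) (\<lambda>x. u (Suc k) x - u k x)"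
  define N where "N = l2_norm \<Omega> (\<lambda>x. u (Suc k) x - u k x)"
  have "f (u (Suc k)) \<le> f (u k) + I + Lf / 2 * N\<^sup>2"
    unfolding I_def N_def using A uL2 by (intro descent_lemma) (auto simp: assumption_A_def)
  then have "f (u (Suc k)) + (L - Lf) / 2 * N\<^sup>2 \<le> f (u k) + (I + L / 2 * N\<^sup>2)"
    by (simp add: field_simps)
  then have "ereal (f (u (Suc k)) + (L - Lf) / 2 * N\<^sup>2) + G_int \<Omega> g (u (Suc k))
      \<le> ereal (f (u k)) + prox_objective \<Omega> g L (df (u k)) (u k) (u (Suc k))"
    unfolding prox_objective_def I_def[symmetric] N_def[symmetric] add.assoc[symmetric]
    by (intro add_right_mono) simp
  also have "\<dots> \<le> ereal (f (u k)) + prox_objective \<Omega> g L (df (u k)) (u k) (u k)"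
    by (intro add_left_mono prox_grad_iterates_minimal[OF P uL2])
  also have "\<dots> = ereal (f (u k)) + G_int \<Omega> g (u k)"
    by (simp add: prox_objective_self)
  finally show ?thesis unfolding N_def .
qed

lemma summable_if_decreasing_bounded_below:
  fixes \<Phi> e :: "nat \<Rightarrow> real"
  assumes dec: "\<And>k. \<Phi> (Suc k) + e k \<le> \<Phi> k" and e: "\<And>k. 0 \<le> e k" and bdd: "\<And>k. c \<le> \<Phi> k"
  shows "summable e"
proof (rule summableI_nonneg_bounded)
  fix n
  have "(\<Sum>k<n. e k) \<le> (\<Sum>k<n. \<Phi> k - \<Phi> (Suc k))"
    using dec by (intro sum_mono) (simp add: algebra_simps)
  also have "\<dots> = \<Phi> 0 - \<Phi> n" by (rule sum_lessThan_telescope')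
  finally show "(\<Sum>k<n. e k) \<le> \<Phi> 0 - c" using bdd[of n] by linarith
qed (rule e)

lemma prox_grad_summable_steps:
  assumes A: "assumption_A \<Omega> f df Lf" and g0: "\<And>t. 0 \<le> g t" and gz: "g 0 = 0"
    and LL: "L > Lf" and P: "prox_grad_iterates \<Omega> f df g L u"
  shows "summable (\<lambda>k. (l2_norm \<Omega> (\<lambda>x. u (Suc k) x - u k x))\<^sup>2)"
proof -
  obtain c where c: "\<forall>v\<in>L2 \<Omega>. c \<le> f v" using A unfolding assumption_A_def by blast
  have uL2: "u k \<in> L2 \<Omega>" for k using P unfolding prox_grad_iterates_def by blast
  define N where "N = (\<lambda>k. l2_norm \<Omega> (\<lambda>x. u (Suc k) x - u k x))"
  \<comment> \<open>\<open>u 0\<close> is arbitrary, so the objective is only known to be finite from \<open>u 1\<close> on.\<close>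
  define \<Phi> where "\<Phi> = (\<lambda>k. f (u (Suc k)) + real_of_ereal (G_int \<Omega> g (u (Suc k))))"
  have G: "G_int \<Omega> g (u (Suc k)) = ereal (real_of_ereal (G_int \<Omega> g (u (Suc k))))" for k
    using prox_grad_iterates_G_int_finite[OF gz P, of k] G_int_nonneg[of \<Omega> g "u (Suc k)"]
    by (cases "G_int \<Omega> g (u (Suc k))") auto
  have "\<Phi> (Suc k) + (L - Lf) / 2 * (N (Suc k))\<^sup>2 \<le> \<Phi> k" for k
    using prox_grad_decrease[OF A P, of "Suc k"] unfolding \<Phi>_def N_def
    by (subst (asm) (1 2) G) simp
  moreover have "c \<le> \<Phi> k" for k
    using bspec[OF c uL2[of "Suc k"]] real_of_ereal_pos[OF G_int_nonneg[of \<Omega> g "u (Suc k)"]]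
    unfolding \<Phi>_def by linarith
  ultimately have "summable (\<lambda>k. (L - Lf) / 2 * (N (Suc k))\<^sup>2)"
    using LL by (intro summable_if_decreasing_bounded_below[of \<Phi> _ c]) auto
  then have "summable (\<lambda>k. (N (Suc k))\<^sup>2)"
    using LL by (simp add: summable_cmult_iff)
  then show ?thesis unfolding N_def by (subst (asm) summable_Suc_iff)
qed

lemma AE_LIMSEQ_zero_if_summable_l2_norm:
  assumes D: "\<And>k. D k \<in> L2 \<Omega>" and S: "summable (\<lambda>k. (l2_norm \<Omega> (D k))\<^sup>2)"
  shows "AE x in lebesgue_on \<Omega>. (\<lambda>k. D k x) \<longlonglongrightarrow> 0"
proof -
  have [measurable]: "D k \<in> borel_measurable (lebesgue_on \<Omega>)" for k using D[of k] by (simp add: L2_def)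
  have norm: "(\<integral>\<^sup>+ x. ennreal ((D k x)\<^sup>2) \<partial>lebesgue_on \<Omega>) = ennreal ((l2_norm \<Omega> (D k))\<^sup>2)" for k
    unfolding l2_norm_power2 using D[of k] by (intro nn_integral_eq_integral) (auto simp: L2_def)
  have "(\<integral>\<^sup>+ x. (\<Sum>k. ennreal ((D k x)\<^sup>2)) \<partial>lebesgue_on \<Omega>)
      = (\<Sum>k. \<integral>\<^sup>+ x. ennreal ((D k x)\<^sup>2) \<partial>lebesgue_on \<Omega>)"
    by (rule nn_integral_suminf) measurable
  also have "\<dots> \<noteq> \<infinity>"
    unfolding norm infinity_ennreal_def by (rule ennreal_suminf_neq_top[OF S zero_le_power2])
  finally have "AE x in lebesgue_on \<Omega>. (\<Sum>k. ennreal ((D k x)\<^sup>2)) \<noteq> \<infinity>"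
    by (rule nn_integral_PInf_AE[rotated]) measurable
  then show ?thesis
  proof eventually_elim
    case (elim x)
    have "summable (\<lambda>k. (D k x)\<^sup>2)" using elim by (intro summable_suminf_not_top) auto
    then have "(\<lambda>k. sqrt ((D k x)\<^sup>2)) \<longlonglongrightarrow> sqrt 0"
      by (intro tendsto_real_sqrt summable_LIMSEQ_zero)
    then have "(\<lambda>k. \<bar>D k x\<bar>) \<longlonglongrightarrow> 0" by simp
    then show ?case by (rule tendsto_rabs_zero_cancel)
  qed
qed

section \<open>Localization of the proximal subproblem\<close>

lemma lsc_ereal_open_superlevel:
  assumes "lsc_ereal g" shows "open {t. y < g t}"
proof (subst open_subopen, intro ballI)
  fix t assume t: "t \<in> {t. y < g t}"
  then have "y < Liminf (at t) g" using assms unfolding lsc_ereal_def by (meson order_less_le_trans mem_Collect_eq)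
  then have "eventually (\<lambda>s. y < g s) (at t)" by (rule less_LiminfD)
  then obtain S where "open S" "t \<in> S" "\<forall>s\<in>S. s \<noteq> t \<longrightarrow> y < g s"
    unfolding eventually_at_topological by blast
  then show "\<exists>T. open T \<and> t \<in> T \<and> T \<subseteq> {t. y < g t}" using t by (intro exI[of _ S]) auto
qed

lemma lsc_ereal_borel_measurable:
  assumes "lsc_ereal g" shows "g \<in> borel_measurable borel"
  unfolding borel_measurable_ereal_iff_Ioi
proof
  fix y
  have "g -` {y<..} \<inter> space borel = {t. y < g t}" by auto
  then show "g -` {y<..} \<inter> space borel \<in> sets borel"
    using lsc_ereal_open_superlevel[OF assms, of y] by simp
qed

lemma lsc_ereal_eventually_less:
  assumes "lsc_ereal g" "(b \<longlongrightarrow> p) F" "y < g p"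
  shows "\<forall>\<^sub>F k in F. y < g (b k)"
  using topological_tendstoD[OF assms(2) lsc_ereal_open_superlevel[OF assms(1), of y]] assms(3) by simp

lemma AE_le_if_patching_not_better:
  fixes F1 F2 :: "'b \<Rightarrow> real"
  assumes int1: "integrable M F1" and int2: "integrable M F2"
    and patch: "\<And>A. A \<in> sets M \<Longrightarrow> (\<integral>x. F1 x \<partial>M) \<le> (\<integral>x. (if x \<in> A then F2 x else F1 x) \<partial>M)"
  shows "AE x in M. F1 x \<le> F2 x"
proof -
  have [measurable]: "F1 \<in> borel_measurable M" "F2 \<in> borel_measurable M" using int1 int2 by auto
  define A where "A = {x \<in> space M. F2 x < F1 x}"
  have A[measurable]: "A \<in> sets M" unfolding A_def by measurable
  define \<delta> where "\<delta> x = (F1 x - F2 x) * indicator A x" for x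
  have \<delta>_int: "integrable M \<delta>"
    unfolding \<delta>_def using A Bochner_Integration.integrable_diff[OF int1 int2]
    by (rule integrable_real_mult_indicator)
  have \<delta>_nonneg: "0 \<le> \<delta> x" for x unfolding \<delta>_def A_def by (auto split: split_indicator)
  have "(\<integral>x. (if x \<in> A then F2 x else F1 x) \<partial>M) = (\<integral>x. F1 x - \<delta> x \<partial>M)"
    by (intro Bochner_Integration.integral_cong) (auto simp: \<delta>_def split: split_indicator)
  also have "\<dots> = (\<integral>x. F1 x \<partial>M) - (\<integral>x. \<delta> x \<partial>M)" using int1 \<delta>_int by simp
  finally have "(\<integral>x. \<delta> x \<partial>M) \<le> 0" using patch[OF A] by simp
  moreover have "0 \<le> (\<integral>x. \<delta> x \<partial>M)" using \<delta>_nonneg by (simp add: integral_nonneg_AE)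
  ultimately have "(\<integral>x. \<delta> x \<partial>M) = 0" by (rule antisym)
  then have "AE x in M. \<delta> x = 0"
    using integral_nonneg_eq_0_iff_AE[OF \<delta>_int] \<delta>_nonneg by simp
  then show ?thesis
    using AE_space
  proof eventually_elim
    case (elim x)
    show ?case
    proof (rule ccontr)
      assume "\<not> F1 x \<le> F2 x"
      then show False using elim by (simp add: \<delta>_def A_def)
    qed
  qed
qed

lemma g_patch_finite_integrable:
  assumes fm: "finite_measure (lebesgue_on \<Omega>)" and g0: "\<And>t. 0 \<le> g t" and gm: "g \<in> borel_measurable borel"
    and b: "b \<in> borel_measurable (lebesgue_on \<Omega>)" and A: "A \<in> sets (lebesgue_on \<Omega>)" and d: "g d = ereal gd"
    and fin: "AE x in lebesgue_on \<Omega>. g (b x) \<noteq> \<infinity>"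
    and int: "integrable (lebesgue_on \<Omega>) (\<lambda>x. real_of_ereal (g (b x)))"
  shows "AE x in lebesgue_on \<Omega>. g (if x \<in> A then d else b x) \<noteq> \<infinity>"
    and "integrable (lebesgue_on \<Omega>) (\<lambda>x. real_of_ereal (g (if x \<in> A then d else b x)))"
proof -
  interpret finite_measure "lebesgue_on \<Omega>" by (rule fm)
  have [measurable]: "b \<in> borel_measurable (lebesgue_on \<Omega>)" "A \<in> sets (lebesgue_on \<Omega>)"
    "g \<in> borel_measurable borel" using b A gm by auto
  show "AE x in lebesgue_on \<Omega>. g (if x \<in> A then d else b x) \<noteq> \<infinity>"
    using fin by eventually_elim (simp add: d)
  show "integrable (lebesgue_on \<Omega>) (\<lambda>x. real_of_ereal (g (if x \<in> A then d else b x)))"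
  proof (rule Bochner_Integration.integrable_bound)
    show "integrable (lebesgue_on \<Omega>) (\<lambda>x. real_of_ereal (g (b x)) + gd)" using int by simp
    show "AE x in lebesgue_on \<Omega>. norm (real_of_ereal (g (if x \<in> A then d else b x)))
        \<le> norm (real_of_ereal (g (b x)) + gd)"
      using g0[of d] g0 by (intro AE_I2) (auto simp: d real_of_ereal_pos)
  qed measurable
qed

lemma prox_minimizer_pointwise:
  assumes fm: "finite_measure (lebesgue_on \<Omega>)"
    and g0: "\<And>t. 0 \<le> g t" and gm: "g \<in> borel_measurable borel"
    and a: "a \<in> L2 \<Omega>" and b: "b \<in> L2 \<Omega>" and c: "c \<in> L2 \<Omega>" and Gb: "G_int \<Omega> g b \<noteq> \<infinity>"
    and min: "\<And>v. v \<in> L2 \<Omega> \<Longrightarrow> prox_objective \<Omega> g L c a b \<le> prox_objective \<Omega> g L c a v"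
  shows "AE x in lebesgue_on \<Omega>. ereal (c x * (b x - a x) + L / 2 * (b x - a x)\<^sup>2) + g (b x)
           \<le> ereal (c x * (d - a x) + L / 2 * (d - a x)\<^sup>2) + g d"
proof (cases "g d")
  case (real gd)
  let ?M = "lebesgue_on \<Omega>"
  interpret finite_measure ?M by (rule fm)
  have meas[measurable]: "a \<in> borel_measurable ?M" "b \<in> borel_measurable ?M" "c \<in> borel_measurable ?M"
    "g \<in> borel_measurable borel" using a b c gm by (auto simp: L2_def)
  have gb_fin: "AE x in ?M. g (b x) \<noteq> \<infinity>" and gb_int: "integrable ?M (\<lambda>x. real_of_ereal (g (b x)))"
    using G_int_finite_imp[OF g0 _ Gb] by auto
  define F where "F x t = c x * (t - a x) + L / 2 * (t - a x)\<^sup>2 + real_of_ereal (g t)" for x t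
  have F_int: "integrable ?M (\<lambda>x. F x d)"
    unfolding F_def by (rule prox_objective_eq_integral(2)[OF g0 a c L2_const[OF fm]]) (simp_all add: real)
  have "AE x in ?M. F x (b x) \<le> F x d"
  proof (rule AE_le_if_patching_not_better)
    show "integrable ?M (\<lambda>x. F x (b x))"
      unfolding F_def by (rule prox_objective_eq_integral(2)[OF g0 a c b gb_fin gb_int])
    fix A assume A[measurable]: "A \<in> sets ?M"
    define w where "w x = (if x \<in> A then d else b x)" for x
    have w: "w \<in> L2 \<Omega>" unfolding w_def using fm b A by (rule L2_patch)
    note gw = g_patch_finite_integrable[OF fm g0 gm meas(2) A real gb_fin gb_int, folded w_def]
    have "ereal (\<integral>x. F x (b x) \<partial>?M) = prox_objective \<Omega> g L c a b"
      unfolding F_def by (rule prox_objective_eq_integral(1)[OF g0 a c b gb_fin gb_int, symmetric])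
    also have "\<dots> \<le> prox_objective \<Omega> g L c a w" by (rule min[OF w])
    also have "\<dots> = ereal (\<integral>x. F x (w x) \<partial>?M)"
      unfolding F_def by (rule prox_objective_eq_integral(1)[OF g0 a c w gw])
    also have "(\<lambda>x. F x (w x)) = (\<lambda>x. if x \<in> A then F x d else F x (b x))"
      unfolding w_def by auto
    finally show "(\<integral>x. F x (b x) \<partial>?M) \<le> (\<integral>x. (if x \<in> A then F x d else F x (b x)) \<partial>?M)"
      by simp
  qed (rule F_int)
  then show ?thesis
    using gb_fin
  proof eventually_elim
    case (elim x)
    then obtain r where "g (b x) = ereal r" using g0[of "b x"] by (cases "g (b x)") auto
    with elim(1) show ?case by (simp add: F_def real)
  qed
next
  case PInf
  then show ?thesis by simp
next
  case MInf
  then show ?thesis using g0[of d] by simp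
qed

lemma prox_grad_iterates_pointwise:
  assumes \<Omega>: "\<Omega> \<in> sets lebesgue" "emeasure lebesgue \<Omega> < \<infinity>"
    and A: "assumption_A \<Omega> f df Lf" and B: "assumption_B g" and P: "prox_grad_iterates \<Omega> f df g L u"
  shows "AE x in lebesgue_on \<Omega>.
           ereal (df (u k) x * (u (Suc k) x - u k x) + L / 2 * (u (Suc k) x - u k x)\<^sup>2) + g (u (Suc k) x)
           \<le> ereal (df (u k) x * (d - u k x) + L / 2 * (d - u k x)\<^sup>2) + g d"
proof (rule prox_minimizer_pointwise[OF finite_measure_lebesgue_on[OF \<Omega>]])
  have uL2: "u j \<in> L2 \<Omega>" for j using P unfolding prox_grad_iterates_def by blast
  show "u k \<in> L2 \<Omega>" "u (Suc k) \<in> L2 \<Omega>" "df (u k) \<in> L2 \<Omega>"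
    using uL2 A by (auto simp: assumption_A_def frechet_gradient_def)
  show "0 \<le> g t" for t using B by (simp add: assumption_B_def)
  show "g \<in> borel_measurable borel"
    using B by (intro lsc_ereal_borel_measurable) (simp add: assumption_B_def)
  show "G_int \<Omega> g (u (Suc k)) \<noteq> \<infinity>"
    using B P by (intro prox_grad_iterates_G_int_finite) (auto simp: assumption_B_def)
  show "prox_objective \<Omega> g L (df (u k)) (u k) (u (Suc k)) \<le> prox_objective \<Omega> g L (df (u k)) (u k) v"
    if "v \<in> L2 \<Omega>" for v
    using P that by (rule prox_grad_iterates_minimal)
qed

section \<open>Weak limits as pointwise cluster values\<close>

lemma weak_conv_AE_exists_above:
  assumes fm: "finite_measure (lebesgue_on \<Omega>)"
    and us: "ustar \<in> L2 \<Omega>" and w: "\<And>j. w j \<in> L2 \<Omega>" and wc: "weak_conv \<Omega> w ustar" and e: "e > 0"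
  shows "AE x in lebesgue_on \<Omega>. \<exists>j\<ge>N. ustar x - e < w j x"
proof -
  let ?M = "lebesgue_on \<Omega>"
  interpret finite_measure ?M by (rule fm)
  have [measurable]: "w j \<in> borel_measurable ?M" "ustar \<in> borel_measurable ?M" for j
    using w us by (auto simp: L2_def)
  define A where "A = {x \<in> space ?M. \<forall>j\<ge>N. w j x \<le> ustar x - e}"
  have A[measurable]: "A \<in> sets ?M" unfolding A_def by measurable
  \<comment> \<open>Testing against the indicator of \<open>A\<close> shows \<open>\<langle>w j, 1\<^sub>A\<rangle> \<le> \<langle>ustar, 1\<^sub>A\<rangle> - e |A|\<close> for all \<open>j \<ge> N\<close>.\<close>
  have ind: "indicator A \<in> L2 \<Omega>"
  proof -
    have "indicator A = (\<lambda>x. if x \<in> A then 1 else 0 :: real)" by (rule ext) (simp add: indicator_def)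
    then show ?thesis using L2_patch[OF fm L2_zero A, of 1] by (simp only:)
  qed
  have "integrable ?M (indicator A :: _ \<Rightarrow> real)" by (simp add: emeasure_eq_measure)
  note ints = this integrable_mult_L2[OF us ind] integrable_mult_L2[OF w ind]
  have "l2_inner \<Omega> (w j) (indicator A) \<le> l2_inner \<Omega> ustar (indicator A) - e * measure ?M A"
    if "j \<ge> N" for j
  proof -
    have "l2_inner \<Omega> (w j) (indicator A) \<le> (\<integral>x. ustar x * indicator A x - e * indicator A x \<partial>?M)"
      unfolding l2_inner_def
    proof (rule integral_mono)
      show "integrable ?M (\<lambda>x. ustar x * indicator A x - e * indicator A x)"
        using ints(2) integrable_mult_right[OF ints(1)] by (rule Bochner_Integration.integrable_diff)
      fix x assume "x \<in> space ?M"
      then show "w j x * indicator A x \<le> ustar x * indicator A x - e * indicator A x"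
        using that by (cases "x \<in> A") (simp_all add: A_def)
    qed (rule ints(3))
    also have "\<dots> = l2_inner \<Omega> ustar (indicator A) - e * measure ?M A"
      unfolding l2_inner_def using ints sets.sets_into_space[OF A] by (simp add: Int_absorb2)
    finally show ?thesis .
  qed
  moreover have "(\<lambda>j. l2_inner \<Omega> (w j) (indicator A)) \<longlonglongrightarrow> l2_inner \<Omega> ustar (indicator A)"
    using wc ind unfolding weak_conv_def by blast
  ultimately have "l2_inner \<Omega> ustar (indicator A) \<le> l2_inner \<Omega> ustar (indicator A) - e * measure ?M A"
    by (intro LIMSEQ_le_const2) auto
  then have "emeasure ?M A = 0" using e measure_nonneg[of ?M A]
    by (simp add: emeasure_eq_measure mult_le_0_iff)
  then have "A \<in> null_sets ?M" using A by (simp add: null_sets_def)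
  then have "AE x in ?M. x \<notin> A" by (rule AE_not_in)
  then show ?thesis using AE_space by eventually_elim (auto simp: A_def not_le)
qed

lemma weak_conv_uminus:
  assumes "weak_conv \<Omega> w u"
  shows "weak_conv \<Omega> (\<lambda>j x. - w j x) (\<lambda>x. - u x)"
  using assms unfolding weak_conv_def l2_inner_def by (auto intro: tendsto_minus)

lemma weak_conv_AE_frequently_above:
  assumes fm: "finite_measure (lebesgue_on \<Omega>)"
    and us: "ustar \<in> L2 \<Omega>" and w: "\<And>j. w j \<in> L2 \<Omega>" and wc: "weak_conv \<Omega> w ustar"
  shows "AE x in lebesgue_on \<Omega>. \<forall>e>0. \<exists>\<^sub>F j in sequentially. ustar x - e < w j x"
proof -
  have "AE x in lebesgue_on \<Omega>. \<forall>m N. \<exists>j\<ge>N. ustar x - inverse (real (Suc m)) < w j x"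
    unfolding AE_all_countable by (intro allI weak_conv_AE_exists_above[OF fm us w wc]) simp
  then show ?thesis
  proof eventually_elim
    case (elim x)
    show ?case
    proof (intro allI impI)
      fix e :: real assume "e > 0"
      then obtain m where "inverse (real (Suc m)) < e" using reals_Archimedean by blast
      then show "\<exists>\<^sub>F j in sequentially. ustar x - e < w j x"
        using elim unfolding frequently_sequentially by (meson diff_strict_left_mono less_trans)
    qed
  qed
qed

lemma weak_conv_AE_frequently_below:
  assumes fm: "finite_measure (lebesgue_on \<Omega>)"
    and us: "ustar \<in> L2 \<Omega>" and w: "\<And>j. w j \<in> L2 \<Omega>" and wc: "weak_conv \<Omega> w ustar"
  shows "AE x in lebesgue_on \<Omega>. \<forall>e>0. \<exists>\<^sub>F j in sequentially. w j x < ustar x + e"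
proof -
  have "AE x in lebesgue_on \<Omega>. \<forall>e>0. \<exists>\<^sub>F j in sequentially. - ustar x - e < - w j x"
    using weak_conv_AE_frequently_above[OF fm L2_uminus[OF us] L2_uminus[OF w] weak_conv_uminus[OF wc]] .
  then show ?thesis
  proof eventually_elim
    case (elim x)
    show ?case
    proof (intro allI impI)
      fix e :: real assume "e > 0"
      with elim have "\<exists>\<^sub>F j in sequentially. - ustar x - e < - w j x" by blast
      then show "\<exists>\<^sub>F j in sequentially. w j x < ustar x + e" by (rule frequently_elim1) simp
    qed
  qed
qed

lemma frequently_subseq:
  "strict_mono r \<Longrightarrow> \<exists>\<^sub>F j in sequentially. P (r j) \<Longrightarrow> \<exists>\<^sub>F k in sequentially. P k"
  unfolding frequently_sequentially by (meson le_trans seq_suble)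

lemma weak_subseq_limit_AE_frequently_near:
  assumes fm: "finite_measure (lebesgue_on \<Omega>)" and us: "ustar \<in> L2 \<Omega>" and u: "\<And>k. u k \<in> L2 \<Omega>"
    and r: "strict_mono r" and wc: "weak_conv \<Omega> (u \<circ> r) ustar"
  shows "AE x in lebesgue_on \<Omega>. (\<forall>e>0. \<exists>\<^sub>F k in sequentially. ustar x - e < u k x)
                              \<and> (\<forall>e>0. \<exists>\<^sub>F k in sequentially. u k x < ustar x + e)"
proof -
  have w: "(u \<circ> r) j \<in> L2 \<Omega>" for j using u by simp
  show ?thesis
    using weak_conv_AE_frequently_above[OF fm us w wc] weak_conv_AE_frequently_below[OF fm us w wc]
  proof eventually_elim
    case (elim x)
    then show ?case unfolding comp_def by (blast intro: frequently_subseq[OF r])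
  qed
qed

lemma frequently_near_if_increments_vanish:
  fixes a :: "nat \<Rightarrow> real"
  assumes step: "(\<lambda>k. a (Suc k) - a k) \<longlonglongrightarrow> 0" and e: "e > 0"
    and above: "\<exists>\<^sub>F k in sequentially. p - e < a k" and below: "\<exists>\<^sub>F k in sequentially. a k < p + e"
  shows "\<exists>\<^sub>F k in sequentially. \<bar>a k - p\<bar> < e"
proof (rule ccontr)
  assume "\<not> ?thesis"
  then have "\<forall>\<^sub>F k in sequentially. e \<le> \<bar>a k - p\<bar>" by (simp add: not_frequently not_less)
  moreover have "\<forall>\<^sub>F k in sequentially. \<bar>a (Suc k) - a k\<bar> < 2 * e"
    using step e unfolding lim_sequentially eventually_sequentially dist_real_def by force
  ultimately have "\<forall>\<^sub>F k in sequentially. e \<le> \<bar>a k - p\<bar> \<and> \<bar>a (Suc k) - a k\<bar> < 2 * e"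
    by (rule eventually_conj)
  then obtain N where N: "\<And>k. N \<le> k \<Longrightarrow> e \<le> \<bar>a k - p\<bar> \<and> \<bar>a (Suc k) - a k\<bar> < 2 * e"
    unfolding eventually_sequentially by blast
  \<comment> \<open>Steps shorter than \<open>2 e\<close> cannot jump across the gap \<open>]p - e, p + e[\<close>.\<close>
  have "(a N \<le> p - e \<longrightarrow> a k \<le> p - e) \<and> (p + e \<le> a N \<longrightarrow> p + e \<le> a k)" if "N \<le> k" for k
    using that
  proof (induction k rule: dec_induct)
    case (step k)
    then show ?case using N[of k] N[of "Suc k"] by auto
  qed simp
  then have "(a N \<le> p - e \<longrightarrow> (\<forall>\<^sub>F k in sequentially. a k \<le> p - e))
      \<and> (p + e \<le> a N \<longrightarrow> (\<forall>\<^sub>F k in sequentially. p + e \<le> a k))"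
    unfolding eventually_sequentially by blast
  moreover have "a N \<le> p - e \<or> p + e \<le> a N" using N[of N] by auto
  ultimately show False using above below by (auto simp: frequently_def not_less)
qed

lemma inf_sequentially_filtercomap_neq_bot:
  fixes a :: "nat \<Rightarrow> 'b::metric_space"
  assumes near: "\<And>e. e > 0 \<Longrightarrow> \<exists>\<^sub>F k in sequentially. dist (a k) p < e"
  shows "inf sequentially (filtercomap a (nhds p)) \<noteq> bot"
proof
  assume "inf sequentially (filtercomap a (nhds p)) = bot"
  then obtain Q R where Q: "eventually Q sequentially" and R: "eventually R (filtercomap a (nhds p))"
    and QR: "\<And>k. Q k \<Longrightarrow> R k \<Longrightarrow> False"
    using eventually_inf[of "\<lambda>_. False"] by (metis eventually_bot)
  obtain e where e: "e > 0" and eR: "\<And>k. dist (a k) p < e \<Longrightarrow> R k"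
    using R unfolding eventually_filtercomap eventually_nhds_metric by blast
  have "\<exists>\<^sub>F k in sequentially. dist (a k) p < e \<and> Q k"
    using near[OF e] Q by (rule frequently_eventually_frequently)
  then show False using QR eR by (auto dest: frequently_ex)
qed

section \<open>Passing to the limit\<close>

lemma prox_inequality_limit:
  fixes a b c :: "'b \<Rightarrow> real"
  assumes lsc: "lsc_ereal g" and g0: "\<And>t. 0 \<le> g t" and F: "F \<noteq> bot"
    and a: "(a \<longlongrightarrow> p) F" and b: "(b \<longlongrightarrow> p) F" and c: "(c \<longlongrightarrow> c0) F"
    and ineq: "\<forall>\<^sub>F k in F. ereal (c k * (b k - a k) + L / 2 * (b k - a k)\<^sup>2) + g (b k)
                 \<le> ereal (c k * (d - a k) + L / 2 * (d - a k)\<^sup>2) + g d"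
  shows "ereal (c0 * p) + g p \<le> ereal (c0 * d + L / 2 * (d - p)\<^sup>2) + g d"
proof (cases "g d")
  case (real gd)
  define H where "H k = c k * (d - a k) + L / 2 * (d - a k)\<^sup>2 + gd - (c k * (b k - a k) + L / 2 * (b k - a k)\<^sup>2)" for k
  define R where "R = c0 * (d - p) + L / 2 * (d - p)\<^sup>2 + gd"
  have H_lim: "(H \<longlongrightarrow> R) F"
    unfolding H_def R_def by (auto intro!: tendsto_eq_intros a b c)
  have H_bound: "\<forall>\<^sub>F k in F. g (b k) \<le> ereal (H k)"
    using ineq
  proof eventually_elim
    case (elim k)
    then show ?case by (cases "g (b k)") (auto simp: H_def real)
  qed
  show ?thesis
  proof (rule ccontr)
    assume "\<not> ?thesis"
    then have "ereal R < g p" by (cases "g p") (auto simp: R_def real algebra_simps)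
    then obtain y where y: "ereal R < ereal y" "ereal y < g p" using ereal_dense2 by blast
    have "\<forall>\<^sub>F k in F. y < g (b k)" using lsc b y(2) by (rule lsc_ereal_eventually_less)
    moreover have "\<forall>\<^sub>F k in F. H k < y" using H_lim y(1) by (intro order_tendstoD(2)) auto
    ultimately have "\<forall>\<^sub>F k in F. False"
      using H_bound
    proof eventually_elim
      case (elim k)
      then show False using order_less_le_trans[OF elim(1) elim(3)] by simp
    qed
    then show False using F by (simp add: eventually_False)
  qed
next
  case MInf then show ?thesis using g0[of d] by simp
qed simp

(* Since g is only lower semicontinuous, a countable set of competitors must be dense in the
   graph of g over its domain, not merely in the domain. *)
definition graph_dense :: "(real \<Rightarrow> ereal) \<Rightarrow> real set \<Rightarrow> bool" where
  "graph_dense g D \<longleftrightarrow> (\<forall>d\<in>D. g d \<noteq> \<infinity>) \<and>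
     (\<forall>t. g t \<noteq> \<infinity> \<longrightarrow> (t, real_of_ereal (g t)) \<in> closure ((\<lambda>d. (d, real_of_ereal (g d))) ` D))"

lemma countable_graph_dense_exists:
  obtains D where "countable D" "graph_dense g D"
proof -
  define S where "S = (\<lambda>t. (t, real_of_ereal (g t))) ` {t. g t \<noteq> \<infinity>}"
  obtain T where T: "countable T" "T \<subseteq> S" "S \<subseteq> closure T" by (rule separable)
  have T_eq: "(\<lambda>d. (d, real_of_ereal (g d))) ` fst ` T = T" using T(2) unfolding S_def by force
  show ?thesis
  proof (rule that)
    show "countable (fst ` T)" using T(1) by simp
    show "graph_dense g (fst ` T)"
      unfolding graph_dense_def T_eq using T(2,3) unfolding S_def by auto
  qed
qed

lemma graph_dense_nonempty: "graph_dense g D \<Longrightarrow> g t \<noteq> \<infinity> \<Longrightarrow> D \<noteq> {}"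
  unfolding graph_dense_def by auto

lemma graph_dense_le:
  assumes D: "graph_dense g D" and \<phi>: "continuous_on UNIV \<phi>"
    and le: "\<forall>d\<in>D. X \<le> \<phi> d + real_of_ereal (g d)" and v: "g v \<noteq> \<infinity>"
  shows "X \<le> \<phi> v + real_of_ereal (g v)"
proof -
  let ?C = "{z :: real \<times> real. X \<le> \<phi> (fst z) + snd z}"
  have "closed ?C"
    by (intro closed_Collect_le continuous_intros continuous_on_compose2[OF \<phi>]) auto
  moreover have "(\<lambda>d. (d, real_of_ereal (g d))) ` D \<subseteq> ?C" using le by auto
  ultimately have "closure ((\<lambda>d. (d, real_of_ereal (g d))) ` D) \<subseteq> ?C" by (rule closure_minimal[rotated])
  then show ?thesis using D v unfolding graph_dense_def by auto
qed

lemma limit_point_in_G_L: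
  fixes a c :: "nat \<Rightarrow> real"
  assumes lsc: "lsc_ereal g" and g0: "\<And>t. 0 \<le> g t" and D: "graph_dense g D" "D \<noteq> {}"
    and step: "(\<lambda>k. a (Suc k) - a k) \<longlonglongrightarrow> 0" and c: "c \<longlonglongrightarrow> c0"
    and above: "\<forall>e>0. \<exists>\<^sub>F k in sequentially. p - e < a k"
    and below: "\<forall>e>0. \<exists>\<^sub>F k in sequentially. a k < p + e"
    and prox: "\<And>k d. d \<in> D \<Longrightarrow>
      ereal (c k * (a (Suc k) - a k) + L / 2 * (a (Suc k) - a k)\<^sup>2) + g (a (Suc k))
        \<le> ereal (c k * (d - a k) + L / 2 * (d - a k)\<^sup>2) + g d"
  shows "p \<in> G_L g L (- c0)"
proof -
  \<comment> \<open>Pass to the limit along the indices where \<open>a k\<close> is close to the cluster value \<open>p\<close>.\<close>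
  define F where "F = inf sequentially (filtercomap a (nhds p))"
  have "F \<noteq> bot" unfolding F_def using above below
    by (intro inf_sequentially_filtercomap_neq_bot) (auto simp: dist_real_def intro: frequently_near_if_increments_vanish[OF step])
  have a_lim: "(a \<longlongrightarrow> p) F" unfolding F_def by (rule filterlim_mono[OF filterlim_filtercomap]) auto
  have "((\<lambda>k. a k + (a (Suc k) - a k)) \<longlongrightarrow> p + 0) F"
    using a_lim tendsto_mono[OF _ step] by (intro tendsto_add) (auto simp: F_def)
  then have b_lim: "((\<lambda>k. a (Suc k)) \<longlongrightarrow> p) F" by simp
  have c_lim: "(c \<longlongrightarrow> c0) F" using c by (rule tendsto_mono[rotated]) (simp add: F_def)
  have lim: "ereal (c0 * p) + g p \<le> ereal (c0 * d + L / 2 * (d - p)\<^sup>2) + g d" if "d \<in> D" for d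
    using lsc g0 \<open>F \<noteq> bot\<close> a_lim b_lim c_lim by (rule prox_inequality_limit) (intro always_eventually allI prox[OF that])
  have g_fin: "g d \<noteq> \<infinity>" if "d \<in> D" for d using D(1) that by (simp add: graph_dense_def)
  have g_real: "\<exists>r. g t = ereal r" if "g t \<noteq> \<infinity>" for t using that g0[of t] by (cases "g t") auto
  obtain d0 where d0: "d0 \<in> D" using D(2) by blast
  have "g p \<noteq> \<infinity>" using lim[OF d0] g_real[OF g_fin[OF d0]] by auto
  then obtain q where q: "g p = ereal q" using g_real by blast
  have extend: "c0 * p + q \<le> c0 * v + L / 2 * (v - p)\<^sup>2 + real_of_ereal (g v)" if "g v \<noteq> \<infinity>" for v
  proof (rule graph_dense_le[OF D(1) _ _ that])
    show "continuous_on UNIV (\<lambda>t. c0 * t + L / 2 * (t - p)\<^sup>2)" by (intro continuous_intros)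
    show "\<forall>d\<in>D. c0 * p + q \<le> c0 * d + L / 2 * (d - p)\<^sup>2 + real_of_ereal (g d)"
    proof
      fix d assume d: "d \<in> D"
      then obtain s where "g d = ereal s" using g_real g_fin by blast
      then show "c0 * p + q \<le> c0 * d + L / 2 * (d - p)\<^sup>2 + real_of_ereal (g d)" using lim[OF d] q by simp
    qed
  qed
  have "ereal (c0 * p) + g p \<le> ereal (c0 * v + L / 2 * (v - p)\<^sup>2) + g v" for v
    using extend[of v] q g0[of v] by (cases "g v") auto
  then show ?thesis unfolding G_L_def by simp
qed

theorem theorem4p12:
  fixes \<Omega> :: "'a::euclidean_space set"
    and f :: "('a \<Rightarrow> real) \<Rightarrow> real"
    and df :: "('a \<Rightarrow> real) \<Rightarrow> ('a \<Rightarrow> real)"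
    and g :: "real \<Rightarrow> ereal"
    and Lf L :: real
    and u :: "nat \<Rightarrow> 'a \<Rightarrow> real"
    and ustar :: "'a \<Rightarrow> real"
  assumes "\<Omega> \<in> sets lebesgue"
    and "emeasure lebesgue \<Omega> < \<infinity>"
    and "assumption_A \<Omega> f df Lf"
    and "assumption_B g"
    and "L > Lf"
    and "prox_grad_iterates \<Omega> f df g L u"
    and "ustar \<in> L2 \<Omega>"
    and "\<exists>r. strict_mono r \<and> weak_conv \<Omega> (u \<circ> r) ustar"
    and "AE x in lebesgue_on \<Omega>. (\<lambda>k. df (u k) x) \<longlonglongrightarrow> df ustar x"
  shows "AE x in lebesgue_on \<Omega>. ustar x \<in> G_L g L (- df ustar x)"
proof -
  obtain r where r: "strict_mono r" "weak_conv \<Omega> (u \<circ> r) ustar" using assms(8) by blast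
  have lsc: "lsc_ereal g" and g0: "\<And>t. 0 \<le> g t" and gz: "g 0 = 0"
    using assms(4) unfolding assumption_B_def by auto
  have fm: "finite_measure (lebesgue_on \<Omega>)" using assms(1,2) by (rule finite_measure_lebesgue_on)
  have uL2: "u k \<in> L2 \<Omega>" for k using assms(6) unfolding prox_grad_iterates_def by blast
  obtain D where D: "countable D" "graph_dense g D" by (rule countable_graph_dense_exists)
  have "D \<noteq> {}" using D(2) gz by (intro graph_dense_nonempty[of g D 0]) auto
  have step: "AE x in lebesgue_on \<Omega>. (\<lambda>k. u (Suc k) x - u k x) \<longlonglongrightarrow> 0"
    using prox_grad_summable_steps[OF assms(3) g0 gz assms(5,6)] L2_diff[OF uL2 uL2]
    by (intro AE_LIMSEQ_zero_if_summable_l2_norm)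
  have prox: "AE x in lebesgue_on \<Omega>. \<forall>k. \<forall>d\<in>D.
      ereal (df (u k) x * (u (Suc k) x - u k x) + L / 2 * (u (Suc k) x - u k x)\<^sup>2) + g (u (Suc k) x)
        \<le> ereal (df (u k) x * (d - u k x) + L / 2 * (d - u k x)\<^sup>2) + g d"
    unfolding AE_all_countable AE_ball_countable[OF D(1)]
    using prox_grad_iterates_pointwise[OF assms(1-4,6)] by blast
  have cluster: "AE x in lebesgue_on \<Omega>. (\<forall>e>0. \<exists>\<^sub>F k in sequentially. ustar x - e < u k x)
                                       \<and> (\<forall>e>0. \<exists>\<^sub>F k in sequentially. u k x < ustar x + e)"
    using fm assms(7) uL2 r by (rule weak_subseq_limit_AE_frequently_near)
  show ?thesis
    using step prox cluster assms(9)
  proof eventually_elim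
    case (elim x)
    show ?case
      using lsc g0 D(2) \<open>D \<noteq> {}\<close> elim(1,4) conjunct1[OF elim(3)] conjunct2[OF elim(3)]
      by (rule limit_point_in_G_L) (use elim(2) in blast)
  qed
qed

end
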